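(* Let $G$ be an undirected graph and $n\ge 4$ an even integer. Then $G$ admits a homomorphism to the undirected cycle $C_{n-1}$ on $n-1$ vertices if and only if $G$ admits an orientation that contains no induced subgraph isomorphic to a member of $F_n$.
   Context: Graph homomorphisms are vertex maps sending edges to edges (for digraphs: arcs to arcs). An orientation of an undirected graph $G$ is an oriented graph obtained by choosing exactly one direction for each edge. For $n\ge 3$, $Q_n$ is the oriented path $(q_0,\dots,q_{n-1})$ on $n$ distinct vertices, with exactly one arc between $q_i$ and $q_{i+1}$ for each $i$ and no other arcs, such that: the first two arcs are $q_0\to q_1$ and $q_1\to q_2$; the subpath $(q_1,\dots,q_{n-2})$ is alternating (consecutive arcs have opposite directions); and the last two arcs have the same direction. For even $n\ge4$, $F_n$ denotes the (finite, up to isomorphism) set of surjective homomorphic images of $Q_n$, i.e. the oriented graphs $H$ (no loops, no pair of opposite arcs) for which there is a homomorphism $Q_n\to H$ that is surjective on vertices. *)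

theory Defs
  imports Main
begin

definition undirected_graph :: "'a set \<Rightarrow> ('a \<Rightarrow> 'a \<Rightarrow> bool) \<Rightarrow> bool" where
  "undirected_graph V E \<longleftrightarrow>
     (\<forall>x y. E x y \<longrightarrow> x \<in> V \<and> y \<in> V) \<and>
     (\<forall>x y. E x y \<longrightarrow> E y x) \<and> (\<forall>x. \<not> E x x)"

definition oriented_graph :: "'a set \<Rightarrow> ('a \<Rightarrow> 'a \<Rightarrow> bool) \<Rightarrow> bool" where
  "oriented_graph V A \<longleftrightarrow>
     (\<forall>x y. A x y \<longrightarrow> x \<in> V \<and> y \<in> V) \<and>
     (\<forall>x. \<not> A x x) \<and> (\<forall>x y. \<not> (A x y \<and> A y x))"

definition is_orientation :: "('a \<Rightarrow> 'a \<Rightarrow> bool) \<Rightarrow> ('a \<Rightarrow> 'a \<Rightarrow> bool) \<Rightarrow> bool" where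
  "is_orientation E A \<longleftrightarrow>
     (\<forall>x y. A x y \<longrightarrow> E x y) \<and>
     (\<forall>x y. E x y \<longrightarrow> A x y \<or> A y x) \<and>
     (\<forall>x y. \<not> (A x y \<and> A y x))"

definition cycle_adj :: "nat \<Rightarrow> nat \<Rightarrow> nat \<Rightarrow> bool" where
  "cycle_adj m i j \<longleftrightarrow> i < m \<and> j < m \<and> (j = (i + 1) mod m \<or> i = (j + 1) mod m)"

definition is_hom :: "'a set \<Rightarrow> ('a \<Rightarrow> 'a \<Rightarrow> bool) \<Rightarrow> 'b set \<Rightarrow> ('b \<Rightarrow> 'b \<Rightarrow> bool) \<Rightarrow> ('a \<Rightarrow> 'b) \<Rightarrow> bool" where
  "is_hom V E W F f \<longleftrightarrow> (\<forall>x\<in>V. f x \<in> W) \<and> (\<forall>x y. E x y \<longrightarrow> F (f x) (f y))"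

text \<open>Q is (an instance of) the oriented path Q_n on vertices q_i = i, i < n.\<close>
definition is_Q :: "nat \<Rightarrow> (nat \<Rightarrow> nat \<Rightarrow> bool) \<Rightarrow> bool" where
  "is_Q n Q \<longleftrightarrow> 3 \<le> n \<and>
     (\<forall>i j. Q i j \<longrightarrow> i < n \<and> j < n \<and> (j = i + 1 \<or> i = j + 1)) \<and>
     (\<forall>i. i + 1 < n \<longrightarrow> (Q i (i+1) \<or> Q (i+1) i) \<and> \<not> (Q i (i+1) \<and> Q (i+1) i)) \<and>
     Q 0 1 \<and> Q 1 2 \<and>
     (\<forall>i. 1 \<le> i \<and> i + 2 \<le> n - 2 \<longrightarrow> (Q i (i+1) \<longleftrightarrow> Q (i+2) (i+1))) \<and>
     (Q (n-3) (n-2) \<longleftrightarrow> Q (n-2) (n-1))"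

text \<open>Members of F_n (represented on nat vertices; every member has at most n vertices):
  oriented graphs H admitting a vertex-surjective homomorphism from Q_n.\<close>
definition in_F :: "nat \<Rightarrow> nat set \<Rightarrow> (nat \<Rightarrow> nat \<Rightarrow> bool) \<Rightarrow> bool" where
  "in_F n VH AH \<longleftrightarrow> oriented_graph VH AH \<and>
     (\<exists>Q h. is_Q n Q \<and> is_hom {0..<n} Q VH AH h \<and> h ` {0..<n} = VH)"

definition has_induced_copy ::
  "'a set \<Rightarrow> ('a \<Rightarrow> 'a \<Rightarrow> bool) \<Rightarrow> nat set \<Rightarrow> (nat \<Rightarrow> nat \<Rightarrow> bool) \<Rightarrow> bool" where
  "has_induced_copy V A VH AH \<longleftrightarrow>
     (\<exists>e. inj_on e VH \<and> e ` VH \<subseteq> V \<and>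
          (\<forall>x\<in>VH. \<forall>y\<in>VH. AH x y \<longleftrightarrow> A (e x) (e y)))"

end

theory Submission
  imports Defs
begin

text \<open>Let \<open>m = n - 1\<close>. Orient \<open>C\<^sub>m\<close> so that \<open>1\<close> is its only vertex with both an in-arc and an
  out-arc, and pull this orientation back along a homomorphism \<open>G \<rightarrow> C\<^sub>m\<close>. An induced copy of a
  member of \<open>F\<^sub>n\<close> is the same as a homomorphic image of \<open>Q\<^sub>n\<close>, and a homomorphism from \<open>Q\<^sub>n\<close> to the
  oriented cycle would have to send both middle vertices \<open>q\<^sub>1\<close> and \<open>q\<^sub>n\<^sub>-\<^sub>2\<close> to \<open>1\<close>, which parity
  forbids.

  Conversely, take an orientation of \<open>G\<close> admitting no homomorphism from \<open>Q\<^sub>n\<close>. Consider walks that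
  start at a vertex with both an in-arc and an out-arc and use arcs alternately forwards and
  backwards. Such a walk of odd length at most \<open>m - 2\<close> cannot end at a vertex with an out-arc, for
  otherwise it could be padded to an image of \<open>Q\<^sub>n\<close>. Hence colouring each vertex by the length of a
  shortest such walk reaching it, suitably truncated, is a homomorphism to \<open>C\<^sub>m\<close>.\<close>

lemma cycle_adj_iff:
  assumes "3 \<le> m"
  shows "cycle_adj m i j \<longleftrightarrow>
    i < m \<and> j < m \<and> (j = i + 1 \<or> i = j + 1 \<or> (i = m - 1 \<and> j = 0) \<or> (i = 0 \<and> j = m - 1))"
proof (cases "i < m \<and> j < m")
  case True
  then have "(i + 1) mod m = (if i + 1 = m then 0 else i + 1)"
    and "(j + 1) mod m = (if j + 1 = m then 0 else j + 1)" by auto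
  with True assms show ?thesis unfolding cycle_adj_def by auto
qed (auto simp: cycle_adj_def)

lemma cycle_adj_sym: "cycle_adj m i j \<Longrightarrow> cycle_adj m j i"
  unfolding cycle_adj_def by blast

text \<open>An orientation of the odd cycle \<open>C\<^sub>m\<close> in which \<open>1\<close> is the only vertex with both an
  in-arc and an out-arc.\<close>

definition cycle_orientation :: "nat \<Rightarrow> nat \<Rightarrow> nat \<Rightarrow> bool" where
  "cycle_orientation m i j \<longleftrightarrow>
     cycle_adj m i j \<and> (i = 0 \<or> (odd i \<and> 3 \<le> i) \<or> (i = 1 \<and> j = 2))"

context
  fixes m :: nat
  assumes odd_m: "odd m" and m_ge_3: "3 \<le> m"
begin

lemma cycle_orientation_total:
  "cycle_adj m i j \<Longrightarrow> cycle_orientation m i j \<or> cycle_orientation m j i"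
  using odd_m m_ge_3 unfolding cycle_orientation_def by (simp add: cycle_adj_iff) presburger

lemma cycle_orientation_antisym: "\<not> (cycle_orientation m i j \<and> cycle_orientation m j i)"
  using odd_m m_ge_3 unfolding cycle_orientation_def by (simp add: cycle_adj_iff) presburger

lemma cycle_orientation_target: "cycle_orientation m i j \<Longrightarrow> j = 1 \<or> (even j \<and> j \<noteq> 0)"
  using odd_m m_ge_3 unfolding cycle_orientation_def by (simp add: cycle_adj_iff) presburger

lemma cycle_orientation_middle:
  "cycle_orientation m i j \<Longrightarrow> cycle_orientation m j k \<Longrightarrow> j = 1"
  using cycle_orientation_target unfolding cycle_orientation_def by fastforce

lemma cycle_orientation_from_odd:
  "cycle_orientation m i j \<Longrightarrow> odd i \<Longrightarrow> i + 2 \<le> m \<Longrightarrow> j = i + 1 \<or> (j = i - 1 \<and> 3 \<le> i)"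
  using odd_m m_ge_3 unfolding cycle_orientation_def by (simp add: cycle_adj_iff) presburger

lemma cycle_orientation_into_even:
  "cycle_orientation m j i \<Longrightarrow> even i \<Longrightarrow> 2 \<le> i \<Longrightarrow> i + 3 \<le> m \<Longrightarrow> j = i + 1 \<or> j = i - 1"
  using odd_m m_ge_3 unfolding cycle_orientation_def by (simp add: cycle_adj_iff) presburger

end

text \<open>The path \<open>Q\<^sub>n\<close> for even \<open>n\<close>: \<open>Q_forward n i\<close> says that the arc between \<open>q\<^sub>i\<close> and
  \<open>q\<^sub>i\<^sub>+\<^sub>1\<close> points forward.\<close>

definition Q_forward :: "nat \<Rightarrow> nat \<Rightarrow> bool" where
  "Q_forward n i \<longleftrightarrow> i = 0 \<or> odd i \<or> i = n - 2"

definition Q_path :: "nat \<Rightarrow> nat \<Rightarrow> nat \<Rightarrow> bool" where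
  "Q_path n i j \<longleftrightarrow>
     (j = i + 1 \<and> i + 1 < n \<and> Q_forward n i) \<or> (i = j + 1 \<and> j + 1 < n \<and> \<not> Q_forward n j)"

lemma is_Q_backward: "is_Q n Q \<Longrightarrow> i + 1 < n \<Longrightarrow> Q (i + 1) i \<longleftrightarrow> \<not> Q i (i + 1)"
  unfolding is_Q_def by blast

lemma is_Q_alternating:
  assumes Q: "is_Q n Q"
  shows "1 \<le> i \<Longrightarrow> i + 3 \<le> n \<Longrightarrow> Q i (i + 1) \<longleftrightarrow> odd i"
proof (induction i rule: nat_induct_at_least)
  case base
  with Q show ?case unfolding is_Q_def by (auto simp: numeral_2_eq_2)
next
  case (Suc i)
  have "Q i (i + 1) \<longleftrightarrow> Q (i + 2) (i + 1)"
    using Q Suc.hyps Suc.prems unfolding is_Q_def by simp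
  moreover have "Q (i + 1) (i + 2) \<longleftrightarrow> \<not> Q (i + 2) (i + 1)"
    using is_Q_backward[OF Q, of "i + 1"] Suc.prems by (simp add: add.assoc)
  ultimately show ?case using Suc.IH Suc.prems by simp
qed

lemma is_Q_forward:
  assumes Q: "is_Q n Q" and "even n" and i: "i + 1 < n"
  shows "Q i (i + 1) \<longleftrightarrow> Q_forward n i"
proof -
  have "3 \<le> n" using Q unfolding is_Q_def by blast
  with \<open>even n\<close> have "4 \<le> n" by presburger
  consider "i = 0" | "0 < i" "i + 3 \<le> n" | "i = n - 2" using i by linarith
  then show ?thesis
  proof cases
    case 1
    with Q show ?thesis unfolding is_Q_def Q_forward_def by auto
  next
    case 2
    then show ?thesis using is_Q_alternating[OF Q, of i] unfolding Q_forward_def by auto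
  next
    case 3
    have "Q (n - 3) (n - 3 + 1)"
      using is_Q_alternating[OF Q, of "n - 3"] \<open>even n\<close> \<open>4 \<le> n\<close> by auto
    moreover have "n - 3 + 1 = n - 2" "n - 2 + 1 = n - 1" using \<open>4 \<le> n\<close> by auto
    ultimately show ?thesis using Q 3 unfolding is_Q_def Q_forward_def by auto
  qed
qed

lemma is_Q_iff_Q_path:
  assumes "even n" and "4 \<le> n"
  shows "is_Q n Q \<longleftrightarrow> Q = Q_path n"
proof
  assume Q: "is_Q n Q"
  show "Q = Q_path n"
  proof (intro ext)
    fix i j
    have step: "(Q i (i + 1) \<longleftrightarrow> Q_forward n i) \<and> (Q (i + 1) i \<longleftrightarrow> \<not> Q_forward n i)"
      if "i + 1 < n" for i
      using is_Q_forward[OF Q \<open>even n\<close> that] is_Q_backward[OF Q that] by blast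
    show "Q i j \<longleftrightarrow> Q_path n i j"
    proof
      assume "Q i j"
      then have "j = i + 1 \<and> i + 1 < n \<or> i = j + 1 \<and> j + 1 < n"
        using Q unfolding is_Q_def by auto
      with step \<open>Q i j\<close> show "Q_path n i j" unfolding Q_path_def by auto
    qed (use step in \<open>auto simp: Q_path_def\<close>)
  qed
next
  assume Q: "Q = Q_path n"
  have fwd: "i + 1 < n \<Longrightarrow> Q i (i + 1) \<longleftrightarrow> Q_forward n i"
    and bwd: "i + 1 < n \<Longrightarrow> Q (i + 1) i \<longleftrightarrow> \<not> Q_forward n i" for i
    unfolding Q Q_path_def by auto
  have alternating: "Q i (i + 1) \<longleftrightarrow> Q (i + 2) (i + 1)" if "1 \<le> i" "i + 2 \<le> n - 2" for i
    using fwd[of i] bwd[of "i + 1"] that unfolding Q_forward_def by (simp add: add.assoc)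
  have "Q (n - 3) (n - 3 + 1)" "Q (n - 2) (n - 2 + 1)"
    using fwd[of "n - 3"] fwd[of "n - 2"] assms unfolding Q_forward_def by auto
  moreover have "n - 3 + 1 = n - 2" "n - 2 + 1 = n - 1" using assms by auto
  ultimately have last: "Q (n - 3) (n - 2) \<longleftrightarrow> Q (n - 2) (n - 1)" by simp
  have "Q 0 1" "Q 1 2"
    using fwd[of 0] fwd[of 1] assms unfolding Q_forward_def by (auto simp: numeral_2_eq_2)
  with fwd bwd alternating last assms show "is_Q n Q"
    unfolding is_Q_def by (auto simp: Q Q_path_def)
qed

text \<open>\<open>q\<^sub>1\<close> and \<open>q\<^sub>n\<^sub>-\<^sub>2\<close> both have an in- and an out-arc, so both are sent to \<open>1\<close>. Along the
  path from \<open>q\<^sub>1\<close> the image of \<open>q\<^sub>i\<close> never exceeds \<open>i\<close> and keeps the parity of \<open>i\<close>, since an odd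
  source \<open>\<ge> 3\<close> or an even sink \<open>\<ge> 2\<close> of the cycle orientation is only adjacent to its two
  neighbours; hence the even index \<open>n - 2\<close> cannot be sent to \<open>1\<close>.\<close>

lemma Q_path_no_hom_to_cycle_orientation:
  assumes odd_m: "odd m" and m_ge_3: "3 \<le> m"
  shows "\<not> (\<forall>i j. Q_path (m + 1) i j \<longrightarrow> cycle_orientation m (p i) (p j))"
proof
  assume hom: "\<forall>i j. Q_path (m + 1) i j \<longrightarrow> cycle_orientation m (p i) (p j)"
  have forward: "cycle_orientation m (p i) (p (i + 1))" if "Q_forward (m + 1) i" "i < m" for i
    using hom that unfolding Q_path_def by auto
  have backward: "cycle_orientation m (p (i + 1)) (p i)" if "\<not> Q_forward (m + 1) i" "i < m" for i
    using hom that unfolding Q_path_def by auto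
  have bounded: "1 \<le> p i \<and> p i \<le> i \<and> (even (p i) \<longleftrightarrow> even i)" if "1 \<le> i" "i + 1 \<le> m" for i
    using that
  proof (induction i rule: nat_induct_at_least)
    case base
    have "p 1 = 1"
      using forward[of 0] forward[of 1] m_ge_3
      by (intro cycle_orientation_middle[OF odd_m m_ge_3]) (auto simp: Q_forward_def)
    then show ?case by simp
  next
    case (Suc i)
    show ?case
    proof (cases "odd i")
      case True
      then have "cycle_orientation m (p i) (p (i + 1))"
        using forward Suc.prems unfolding Q_forward_def by auto
      then have "p (i + 1) = p i + 1 \<or> (p (i + 1) = p i - 1 \<and> 3 \<le> p i)"
        using Suc True by (intro cycle_orientation_from_odd[OF odd_m m_ge_3]) auto
      then show ?thesis using Suc True by auto
    next
      case False
      then have "cycle_orientation m (p (i + 1)) (p i)"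
        using backward Suc unfolding Q_forward_def by auto
      moreover have "2 \<le> p i" "even (p i)" using Suc False by (auto simp: le_Suc_eq)
      moreover have "i + 2 \<noteq> m" using False odd_m by auto
      then have "p i + 3 \<le> m" using Suc by linarith
      ultimately have "p (i + 1) = p i + 1 \<or> p (i + 1) = p i - 1"
        using cycle_orientation_into_even[OF odd_m m_ge_3] by blast
      then show ?thesis using Suc False \<open>2 \<le> p i\<close> by auto
    qed
  qed
  have "m - 2 + 1 = m - 1" "m - 1 + 1 = m" using m_ge_3 by auto
  then have "p (m - 1) = 1"
    using forward[of "m - 2"] forward[of "m - 1"] odd_m m_ge_3
    by (intro cycle_orientation_middle[OF odd_m m_ge_3]) (auto simp: Q_forward_def)
  moreover have "even (p (m - 1))" using bounded[of "m - 1"] odd_m m_ge_3 by auto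
  ultimately show False by simp
qed

lemma induced_F_copy_imp_Q_path_hom:
  assumes "in_F n VH AH" and "has_induced_copy V A VH AH" and "even n" and "4 \<le> n"
  shows "\<exists>h. \<forall>i j. Q_path n i j \<longrightarrow> A (h i) (h j)"
proof -
  obtain Q h where Q: "is_Q n Q" and h: "is_hom {0..<n} Q VH AH h"
    using assms(1) unfolding in_F_def by blast
  obtain e where e: "\<forall>x\<in>VH. \<forall>y\<in>VH. AH x y \<longleftrightarrow> A (e x) (e y)"
    using assms(2) unfolding has_induced_copy_def by blast
  have "A (e (h i)) (e (h j))" if "Q_path n i j" for i j
  proof -
    have "Q i j" using that is_Q_iff_Q_path[OF assms(3,4)] Q by simp
    moreover from this have "i < n" "j < n" using Q unfolding is_Q_def by auto
    then have "h i \<in> VH" "h j \<in> VH" using h unfolding is_hom_def by auto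
    ultimately show ?thesis using h e unfolding is_hom_def by blast
  qed
  then show ?thesis by (intro exI[of _ "e \<circ> h"]) simp
qed

text \<open>The image of \<open>h\<close>, transported to the least indices of its fibres, is a member of \<open>F\<^sub>n\<close>
  induced in the oriented graph.\<close>

lemma Q_hom_imp_induced_F_copy:
  assumes graph: "undirected_graph V E" and orient: "is_orientation E A" and Q: "is_Q n Q"
    and hom: "\<And>i j. Q i j \<Longrightarrow> A (h i) (h j)"
  shows "\<exists>VH AH. in_F n VH AH \<and> has_induced_copy V A VH AH"
proof -
  have arc_in_V: "A x y \<Longrightarrow> x \<in> V \<and> y \<in> V" for x y
    using graph orient unfolding undirected_graph_def is_orientation_def by blast
  have "3 \<le> n" using Q unfolding is_Q_def by blast
  have h_in_V: "h i \<in> V" if "i < n" for i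
  proof -
    obtain j where "j + 1 < n" "i = j \<or> i = j + 1"
    proof (cases "i + 1 < n")
      case False
      then show ?thesis using that[of "i - 1"] \<open>i < n\<close> \<open>3 \<le> n\<close> by auto
    qed (use that in blast)
    moreover have "Q j (j + 1) \<or> Q (j + 1) j" if "j + 1 < n" for j
      using Q that unfolding is_Q_def by blast
    ultimately show ?thesis using hom arc_in_V by blast
  qed
  define r where "r i = (LEAST j. h j = h i)" for i
  have h_r: "h (r i) = h i" for i unfolding r_def by (rule LeastI[of "\<lambda>j. h j = h i" i]) simp
  define VH where "VH = r ` {0..<n}"
  define AH where "AH x y \<longleftrightarrow> x \<in> VH \<and> y \<in> VH \<and> A (h x) (h y)" for x y
  have "oriented_graph VH AH"
    using orient graph unfolding oriented_graph_def AH_def is_orientation_def undirected_graph_def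
    by blast
  moreover have "is_hom {0..<n} Q VH AH r"
    using Q hom h_r unfolding is_hom_def is_Q_def AH_def VH_def by auto
  ultimately have "in_F n VH AH" using Q unfolding in_F_def VH_def by blast
  moreover have "inj_on h VH"
  proof (rule inj_onI)
    fix x y
    assume "x \<in> VH" "y \<in> VH" "h x = h y"
    then obtain i j where "x = r i" "y = r j" "h i = h j" unfolding VH_def by (auto simp: h_r)
    then show "x = y" unfolding r_def by simp
  qed
  moreover have "h ` VH \<subseteq> V"
    using h_in_V unfolding VH_def by (auto simp: h_r)
  ultimately show ?thesis unfolding has_induced_copy_def AH_def by blast
qed

lemma induced_F_copy_iff_Q_path_hom:
  assumes "undirected_graph V E" and "is_orientation E A" and "even n" and "4 \<le> n"
  shows "(\<exists>VH AH. in_F n VH AH \<and> has_induced_copy V A VH AH) \<longleftrightarrow>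
    (\<exists>h. \<forall>i j. Q_path n i j \<longrightarrow> A (h i) (h j))"
  using induced_F_copy_imp_Q_path_hom[OF _ _ assms(3,4)]
    Q_hom_imp_induced_F_copy[OF assms(1,2)] is_Q_iff_Q_path[OF assms(3,4)]
  by blast

lemma cycle_hom_imp_orientation_without_Q_path_hom:
  assumes graph: "undirected_graph V E" and "odd m" and "3 \<le> m"
    and c: "is_hom V E {0..<m} (cycle_adj m) c"
  shows "\<exists>A. is_orientation E A \<and> \<not> (\<exists>h. \<forall>i j. Q_path (m + 1) i j \<longrightarrow> A (h i) (h j))"
proof -
  define A where "A x y \<longleftrightarrow> E x y \<and> cycle_orientation m (c x) (c y)" for x y
  have "is_orientation E A"
    unfolding is_orientation_def
  proof (intro conjI allI impI)
    fix x y
    assume "E x y"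
    then have "E y x" "cycle_adj m (c x) (c y)"
      using graph c unfolding undirected_graph_def is_hom_def by auto
    then show "A x y \<or> A y x"
      using \<open>E x y\<close> cycle_orientation_total[OF \<open>odd m\<close> \<open>3 \<le> m\<close>] unfolding A_def by blast
  qed (use cycle_orientation_antisym[OF \<open>odd m\<close> \<open>3 \<le> m\<close>] in \<open>auto simp: A_def\<close>)
  moreover have "\<not> (\<forall>i j. Q_path (m + 1) i j \<longrightarrow> A (h i) (h j))" for h
    using Q_path_no_hom_to_cycle_orientation[OF \<open>odd m\<close> \<open>3 \<le> m\<close>, of "c \<circ> h"]
    unfolding A_def by auto
  ultimately show ?thesis by blast
qed

definition middle_vertex :: "('a \<Rightarrow> 'a \<Rightarrow> bool) \<Rightarrow> 'a \<Rightarrow> bool" where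
  "middle_vertex A x \<longleftrightarrow> (\<exists>a. A a x) \<and> (\<exists>b. A x b)"

inductive alt_walk :: "('a \<Rightarrow> 'a \<Rightarrow> bool) \<Rightarrow> nat \<Rightarrow> 'a \<Rightarrow> bool" for A where
  start: "middle_vertex A x \<Longrightarrow> alt_walk A 0 x"
| forward: "alt_walk A k x \<Longrightarrow> even k \<Longrightarrow> A x y \<Longrightarrow> alt_walk A (Suc k) y"
| backward: "alt_walk A k y \<Longrightarrow> odd k \<Longrightarrow> A x y \<Longrightarrow> alt_walk A (Suc k) x"

lemma alt_walk_odd_has_in_arc: "alt_walk A k x \<Longrightarrow> odd k \<Longrightarrow> \<exists>a. A a x"
  by (induction rule: alt_walk.induct) auto

lemma alt_walk_even_has_out_arc: "alt_walk A k x \<Longrightarrow> even k \<Longrightarrow> \<exists>b. A x b"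
  by (induction rule: alt_walk.induct) (auto simp: middle_vertex_def)

lemma alt_walk_add_2:
  assumes walk: "alt_walk A k x"
  shows "alt_walk A (k + 2) x"
proof (cases "even k")
  case True
  then obtain b where "A x b" using alt_walk_even_has_out_arc[OF walk] by blast
  with walk True have "alt_walk A (Suc k) b" by (rule alt_walk.forward)
  then show ?thesis using True \<open>A x b\<close> by (auto dest: alt_walk.backward)
next
  case False
  then obtain a where "A a x" using alt_walk_odd_has_in_arc[OF walk] by blast
  with walk False have "alt_walk A (Suc k) a" by (rule alt_walk.backward)
  then show ?thesis using False \<open>A a x\<close> by (auto dest: alt_walk.forward)
qed

lemma alt_walk_add_even: "alt_walk A k x \<Longrightarrow> alt_walk A (k + 2 * j) x"
  by (induction j) (auto dest: alt_walk_add_2 simp: add.assoc)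

lemma alt_walk_vertices:
  assumes "alt_walk A k x"
  shows "\<exists>w. middle_vertex A (w 0) \<and> w k = x \<and>
    (\<forall>i<k. if even i then A (w i) (w (Suc i)) else A (w (Suc i)) (w i))"
  using assms
proof (induction rule: alt_walk.induct)
  case (start x)
  then show ?case by (intro exI[of _ "\<lambda>_. x"]) simp
next
  case (forward k x y)
  then obtain w where "middle_vertex A (w 0) \<and> w k = x \<and>
    (\<forall>i<k. if even i then A (w i) (w (Suc i)) else A (w (Suc i)) (w i))" by blast
  with forward.hyps show ?case by (intro exI[of _ "w(Suc k := y)"]) (auto simp: less_Suc_eq)
next
  case (backward k y x)
  then obtain w where "middle_vertex A (w 0) \<and> w k = y \<and>
    (\<forall>i<k. if even i then A (w i) (w (Suc i)) else A (w (Suc i)) (w i))" by blast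
  with backward.hyps show ?case by (intro exI[of _ "w(Suc k := x)"]) (auto simp: less_Suc_eq)
qed

text \<open>Prefixing an in-arc of the starting middle vertex and appending an out-arc of the end turns
  an alternating walk with \<open>n - 3\<close> arcs into a homomorphic image of \<open>Q\<^sub>n\<close>.\<close>

lemma alt_walk_imp_Q_path_hom:
  assumes "even n" and "4 \<le> n" and "alt_walk A (n - 3) v" and "A v z"
  shows "\<exists>h. \<forall>i j. Q_path n i j \<longrightarrow> A (h i) (h j)"
proof -
  obtain w where w0: "middle_vertex A (w 0)" and wv: "w (n - 3) = v"
    and step: "\<And>i. i < n - 3 \<Longrightarrow> if even i then A (w i) (w (Suc i)) else A (w (Suc i)) (w i)"
    using alt_walk_vertices[OF assms(3)] by blast
  obtain a where a: "A a (w 0)" using w0 unfolding middle_vertex_def by blast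
  define h where "h i = (if i = 0 then a else if i \<le> n - 2 then w (i - 1) else z)" for i
  have "A (h i) (h (i + 1))" if "i + 1 < n" and forward: "Q_forward n i" for i
  proof -
    have "i + 2 \<noteq> n" if "odd i" using that \<open>even n\<close> by auto
    with \<open>i + 1 < n\<close> forward consider "i = 0" | "i = n - 2" | "odd i" "0 < i" "i + 3 \<le> n"
      unfolding Q_forward_def by (auto simp: odd_pos)
    then show ?thesis
    proof cases
      case 3
      then have "A (w (i - 1)) (w (Suc (i - 1)))" using step[of "i - 1"] by simp
      with 3 show ?thesis unfolding h_def by auto
    qed (use a wv \<open>A v z\<close> \<open>4 \<le> n\<close> in \<open>auto simp: h_def\<close>)
  qed
  moreover have "A (h (i + 1)) (h i)" if "i + 1 < n" "\<not> Q_forward n i" for i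
  proof -
    have "i + 3 \<noteq> n" if "even i" using that \<open>even n\<close> by auto
    with that have "even i" "0 < i" "i + 4 \<le> n" unfolding Q_forward_def by auto
    then have "A (w (Suc (i - 1))) (w (i - 1))" using step[of "i - 1"] by simp
    with \<open>0 < i\<close> \<open>i + 4 \<le> n\<close> show ?thesis unfolding h_def by auto
  qed
  ultimately show ?thesis unfolding Q_path_def by blast
qed

locale short_odd_walks_end_in_sinks =
  fixes A :: "'a \<Rightarrow> 'a \<Rightarrow> bool" and m :: nat
  assumes odd_m: "odd m" and m_ge_3: "3 \<le> m"
    and odd_walk_end: "alt_walk A k v \<Longrightarrow> odd k \<Longrightarrow> k + 2 \<le> m \<Longrightarrow> \<not> A v z"
begin

text \<open>Apart from the middle vertices, a vertex with an out-arc has no in-arc and is reached only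
  after an even number of steps, any other vertex only after an odd number; so the two truncations
  below keep even colours in \<open>{0..m-1}\<close> and odd ones in \<open>{1..m-2}\<close>.\<close>

definition walk_color :: "'a \<Rightarrow> nat" where
  "walk_color x =
    (if middle_vertex A x then 0
     else if \<exists>b. A x b then (if \<exists>k<m-1. alt_walk A k x then LEAST k. alt_walk A k x else m - 1)
     else if \<exists>k<m. alt_walk A k x then LEAST k. alt_walk A k x else 0)"

lemma walk_color_less: "walk_color x < m"
proof -
  have "(LEAST k. alt_walk A k x) < l" if "\<exists>k<l. alt_walk A k x" for l
    using that Least_le[of "\<lambda>k. alt_walk A k x"] le_less_trans by blast
  with m_ge_3 show ?thesis unfolding walk_color_def by auto
qed

lemma walk_color_middle: "middle_vertex A x \<Longrightarrow> walk_color x = 0"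
  unfolding walk_color_def by simp

lemma walk_color_source:
  assumes "\<not> middle_vertex A x" and "A x b"
  shows "walk_color x = (if \<exists>k<m-1. alt_walk A k x then LEAST k. alt_walk A k x else m - 1)"
proof -
  have "Ex (A x)" using assms(2) by blast
  then show ?thesis unfolding walk_color_def by (simp only: assms(1) if_False if_True)
qed

lemma walk_color_sink:
  assumes "\<not> middle_vertex A x" and "\<And>b. \<not> A x b"
  shows "walk_color x = (if \<exists>k<m. alt_walk A k x then LEAST k. alt_walk A k x else 0)"
proof -
  have "\<not> Ex (A x)" using assms(2) by blast
  then show ?thesis unfolding walk_color_def by (simp only: assms(1) if_False)
qed

lemma walk_color_arc_from_middle:
  assumes "middle_vertex A x" and "A x y"
  shows "walk_color x = 0 \<and> walk_color y = 1"
proof -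
  have walk: "alt_walk A 1 y" using alt_walk.forward[OF alt_walk.start] assms by fastforce
  then have no_out: "\<not> A y z" for z using odd_walk_end[OF walk] m_ge_3 by simp
  then have "\<not> middle_vertex A y" unfolding middle_vertex_def by blast
  let ?d = "LEAST k. alt_walk A k y"
  have "alt_walk A ?d y" "?d \<le> 1"
    using LeastI[of "\<lambda>k. alt_walk A k y", OF walk] Least_le[of "\<lambda>k. alt_walk A k y", OF walk] .
  moreover from this have "odd ?d" using alt_walk_even_has_out_arc[of A ?d y] no_out by blast
  ultimately have "?d = 1" by (cases ?d) auto
  moreover have "\<exists>k<m. alt_walk A k y" using walk m_ge_3 by (intro exI[of _ 1]) simp
  ultimately have "walk_color y = 1" using walk_color_sink[OF \<open>\<not> middle_vertex A y\<close> no_out] by simp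
  with assms show ?thesis using walk_color_middle by simp
qed

lemma walk_color_arc_into_middle:
  assumes "\<not> middle_vertex A x" and "middle_vertex A y" and "A x y"
  shows "walk_color x = m - 1 \<and> walk_color y = 0"
proof -
  have no_in: "\<not> A a x" for a using assms unfolding middle_vertex_def by blast
  have no_short_walk: "\<not> (\<exists>k<m - 1. alt_walk A k x)"
  proof (intro notI, elim exE conjE)
    fix k
    assume "k < m - 1" and "alt_walk A k x"
    then have "even k" using alt_walk_odd_has_in_arc[of A k x] no_in by blast
    with \<open>alt_walk A k x\<close> have "alt_walk A (Suc k) y" using assms(3) by (rule alt_walk.forward)
    moreover have "odd (Suc k)" "Suc k + 2 \<le> m"
      using \<open>even k\<close> \<open>k < m - 1\<close> odd_m by presburger+
    ultimately show False
      using odd_walk_end \<open>middle_vertex A y\<close> unfolding middle_vertex_def by blast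
  qed
  show ?thesis
    unfolding walk_color_source[OF assms(1,3)] walk_color_middle[OF assms(2)]
    by (simp only: no_short_walk if_False simp_thms)
qed

lemma walk_color_arc_source_to_sink:
  assumes "\<not> middle_vertex A x" and "\<not> middle_vertex A y" and "A x y"
  shows "cycle_adj m (walk_color x) (walk_color y)"
proof -
  have no_in: "\<not> A a x" and no_out: "\<not> A y b" for a b
    using assms unfolding middle_vertex_def by blast+
  have even_x: "even k" if "alt_walk A k x" for k
    using alt_walk_odd_has_in_arc[OF that] no_in by blast
  have odd_y: "odd k" if "alt_walk A k y" for k
    using alt_walk_even_has_out_arc[OF that] no_out by blast
  have to_y: "alt_walk A (Suc k) y" if "alt_walk A k x" for k
    using alt_walk.forward[OF that even_x[OF that] assms(3)] .
  have to_x: "alt_walk A (Suc k) x" if "alt_walk A k y" for k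
    using alt_walk.backward[OF that odd_y[OF that] assms(3)] .
  have least: "alt_walk A (LEAST k. alt_walk A k z) z \<and> (LEAST k. alt_walk A k z) \<le> k"
    if "alt_walk A k z" for k z
    using LeastI[of "\<lambda>k. alt_walk A k z", OF that] Least_le[of "\<lambda>k. alt_walk A k z", OF that] by blast
  define dx where "dx = (LEAST k. alt_walk A k x)"
  define dy where "dy = (LEAST k. alt_walk A k y)"
  note cx = walk_color_source[OF assms(1,3), folded dx_def]
  note cy = walk_color_sink[OF assms(2) no_out, folded dy_def]
  show ?thesis
  proof (cases "\<exists>k<m - 1. alt_walk A k x")
    case x_near: True
    then obtain k where "k < m - 1" "alt_walk A k x" by blast
    then have "dx < m - 1" "alt_walk A dx x" using least unfolding dx_def by fastforce+
    from \<open>alt_walk A dx x\<close> have "alt_walk A (Suc dx) y" by (rule to_y)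
    then have "dy \<le> Suc dx" "alt_walk A dy y" using least unfolding dy_def by blast+
    then have "dx \<le> Suc dy" using least[OF to_x] unfolding dx_def by blast
    have "dy = dx + 1 \<or> dx = dy + 1"
      using \<open>dy \<le> Suc dx\<close> \<open>dx \<le> Suc dy\<close> even_x[OF \<open>alt_walk A dx x\<close>] odd_y[OF \<open>alt_walk A dy y\<close>]
      by presburger
    moreover have "\<exists>k<m. alt_walk A k y"
      using \<open>alt_walk A (Suc dx) y\<close> \<open>dx < m - 1\<close> by (intro exI[of _ "Suc dx"]) simp
    ultimately show ?thesis
      unfolding cx cy if_P[OF x_near] if_P[OF \<open>\<exists>k<m. alt_walk A k y\<close>]
      using \<open>dx < m - 1\<close> \<open>dy \<le> Suc dx\<close> m_ge_3 by (auto simp: cycle_adj_iff)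
  next
    case x_far: False
    show ?thesis
    proof (cases "\<exists>k<m. alt_walk A k y")
      case y_near: True
      then obtain k where "k < m" "alt_walk A k y" by blast
      then have "dy < m" "alt_walk A dy y" using least unfolding dy_def by fastforce+
      then have "\<not> Suc dy < m - 1" using x_far to_x by blast
      then have "dy = m - 2" using \<open>dy < m\<close> odd_y[OF \<open>alt_walk A dy y\<close>] odd_m by presburger
      then show ?thesis
        unfolding cx cy if_not_P[OF x_far] if_P[OF y_near]
        using m_ge_3 by (auto simp: cycle_adj_iff)
    next
      case y_far: False
      show ?thesis
        unfolding cx cy if_not_P[OF x_far] if_not_P[OF y_far]
        using m_ge_3 by (auto simp: cycle_adj_iff)
    qed
  qed
qed

lemma walk_color_arc: "A x y \<Longrightarrow> cycle_adj m (walk_color x) (walk_color y)"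
  using walk_color_arc_from_middle walk_color_arc_into_middle walk_color_arc_source_to_sink m_ge_3
  by (cases "middle_vertex A x"; cases "middle_vertex A y") (auto simp: cycle_adj_iff)

lemma walk_color_hom:
  assumes "is_orientation E A"
  shows "is_hom V E {0..<m} (cycle_adj m) walk_color"
  using assms walk_color_less walk_color_arc cycle_adj_sym
  unfolding is_hom_def is_orientation_def by (metis atLeastLessThan_iff zero_le)

end

lemma no_Q_path_hom_imp_short_odd_walks_end_in_sinks:
  assumes "even n" and "4 \<le> n" and no_hom: "\<not> (\<exists>h. \<forall>i j. Q_path n i j \<longrightarrow> A (h i) (h j))"
  shows "short_odd_walks_end_in_sinks A (n - 1)"
proof
  show "odd (n - 1)" "3 \<le> n - 1" using assms(1,2) by presburger+
next
  fix k v z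
  assume walk: "alt_walk A k v" and "odd k" and "k + 2 \<le> n - 1"
  obtain a b where "k = 2 * a + 1" and "n = 2 * b" using \<open>odd k\<close> \<open>even n\<close> by (elim oddE evenE)
  with \<open>k + 2 \<le> n - 1\<close> have "n - 3 = k + 2 * (b - a - 2)" by simp
  then have "alt_walk A (n - 3) v" using alt_walk_add_even[OF walk] by simp
  show "\<not> A v z"
  proof
    assume "A v z"
    from no_hom alt_walk_imp_Q_path_hom[OF assms(1,2) \<open>alt_walk A (n - 3) v\<close> this] show False
      by (rule notE)
  qed
qed

theorem mainTheorem11:
  fixes V :: "'a set" and E :: "'a \<Rightarrow> 'a \<Rightarrow> bool" and n :: nat
  assumes "finite V" and "undirected_graph V E" and "even n" and "4 \<le> n"
  shows "(\<exists>c. is_hom V E {0..<n-1} (cycle_adj (n-1)) c) \<longleftrightarrow>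
         (\<exists>A. is_orientation E A \<and>
              \<not> (\<exists>VH AH. in_F n VH AH \<and> has_induced_copy V A VH AH))"
proof -
  have F_copy_iff: "(\<exists>VH AH. in_F n VH AH \<and> has_induced_copy V A VH AH) \<longleftrightarrow>
      (\<exists>h. \<forall>i j. Q_path n i j \<longrightarrow> A (h i) (h j))" if "is_orientation E A" for A
    using induced_F_copy_iff_Q_path_hom[OF assms(2) that assms(3,4)] .
  have "odd (n - 1)" "3 \<le> n - 1" "n - 1 + 1 = n" using assms(3,4) by presburger+
  show ?thesis
  proof
    assume "\<exists>c. is_hom V E {0..<n-1} (cycle_adj (n-1)) c"
    then obtain A where A: "is_orientation E A"
      and "\<not> (\<exists>h. \<forall>i j. Q_path (n - 1 + 1) i j \<longrightarrow> A (h i) (h j))"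
      using cycle_hom_imp_orientation_without_Q_path_hom[OF assms(2) \<open>odd (n - 1)\<close> \<open>3 \<le> n - 1\<close>]
      by blast
    then show "\<exists>A. is_orientation E A \<and> \<not> (\<exists>VH AH. in_F n VH AH \<and> has_induced_copy V A VH AH)"
      using F_copy_iff[OF A] \<open>n - 1 + 1 = n\<close> by auto
  next
    assume "\<exists>A. is_orientation E A \<and> \<not> (\<exists>VH AH. in_F n VH AH \<and> has_induced_copy V A VH AH)"
    then obtain A where A: "is_orientation E A"
      and "\<not> (\<exists>h. \<forall>i j. Q_path n i j \<longrightarrow> A (h i) (h j))"
      using F_copy_iff by blast
    then interpret short_odd_walks_end_in_sinks A "n - 1"
      using no_Q_path_hom_imp_short_odd_walks_end_in_sinks assms(3,4) by blast
    show "\<exists>c. is_hom V E {0..<n-1} (cycle_adj (n-1)) c"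
      using walk_color_hom[OF A] by blast
  qed
qed

end
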